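(* Let $X$ be a finite $T_0$-space with more than one point. If $x\in X$ is a maximum or a minimum of $X$, then $p_X(\lambda)=-\lambda\, p_{X\setminus\{x\}}(\lambda)$, where $p_Y(\lambda)=\det(Y_M-\lambda I)$.
   Context: A finite $T_0$-space is identified with a finite poset via $x\le y$ iff $U_x\subseteq U_y$, where $U_x$ is the minimal open set containing $x$; subsets carry the induced order. For a labelling $Y=\{y_1,\dots,y_m\}$, $Y_M=(y_{i,j})$ is the $m\times m$ matrix with $y_{i,j}=0$ if $y_i\le y_j$ and $y_{i,j}=1$ otherwise. *)

theory Defs
  imports "Jordan_Normal_Form.Determinant"
begin

text \<open>A finite T0-space is identified with a finite poset; we model the space X as a
finite subset of a type with a partial order (the specialization order), subsets
carrying the induced order.  A labelling of Y is a duplicate-free list ys with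
set ys = Y.\<close>

definition poset_matrix :: "'a::order list \<Rightarrow> real mat" where
  "poset_matrix ys = mat (length ys) (length ys)
     (\<lambda>(i,j). if ys ! i \<le> ys ! j then 0 else 1)"

definition poset_charpoly :: "'a::order list \<Rightarrow> real \<Rightarrow> real" where
  "poset_charpoly ys t = det (poset_matrix ys - t \<cdot>\<^sub>m 1\<^sub>m (length ys))"

end

theory Submission
  imports Defs
begin

text \<open>Relabelling Y conjugates \<open>Y\<^sub>M - \<lambda>I\<close> by a permutation matrix, so \<open>p\<^sub>Y\<close> is well defined.
  Labelling X with the extremal point x first, the first column (x a maximum) or the first row
  (x a minimum) of \<open>X\<^sub>M - \<lambda>I\<close> vanishes off the diagonal entry \<open>-\<lambda>\<close>, and Laplace expansion along it
  leaves \<open>-\<lambda>\<close> times the minor \<open>(X - {x})\<^sub>M - \<lambda>I\<close>.\<close>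

lemma det_permute_rows_and_cols:
  fixes A :: "'a::comm_ring_1 mat"
  assumes A: "A \<in> carrier_mat n n" and p: "p permutes {0..<n}"
  shows "det (mat n n (\<lambda>(i,j). A $$ (p i, p j))) = det A"
proof -
  have p_in: "\<And>i. i < n \<Longrightarrow> p i < n" using p by (simp add: permutes_in_image)
  define C where "C = mat n n (\<lambda>(i,j). A $$ (i, p j))"
  have C: "C \<in> carrier_mat n n" unfolding C_def by simp
  have C_transpose: "C = transpose_mat (mat n n (\<lambda>(i,j). transpose_mat A $$ (p i, j)))"
    using A by (intro eq_matI) (auto simp: C_def p_in)
  have "det (mat n n (\<lambda>(i,j). A $$ (p i, p j))) = det (mat n n (\<lambda>(i,j). C $$ (p i, j)))"
    by (rule arg_cong[of _ _ det], rule eq_matI) (auto simp: C_def p_in)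
  also have "\<dots> = signof p * det C"
    by (rule det_permute_rows[OF C p])
  also have "det C = signof p * det (transpose_mat A)"
    unfolding C_transpose using A
    by (subst det_transpose[of _ n]) (auto intro: det_permute_rows[OF _ p])
  also have "det (transpose_mat A) = det A"
    by (rule det_transpose[OF A])
  finally have "det (mat n n (\<lambda>(i,j). A $$ (p i, p j))) = of_int (sign p * sign p) * det A"
    by (simp only: mult.assoc[symmetric] of_int_mult)
  then show ?thesis by simp
qed

lemma poset_charpoly_permute_list:
  assumes "p permutes {..<length ys}"
  shows "poset_charpoly (permute_list p ys) t = poset_charpoly ys t"
proof -
  define n where "n = length ys"
  have len: "length ys = n" by (simp add: n_def)
  have p: "p permutes {0..<n}" using assms by (simp add: n_def atLeast0LessThan)
  have p_in: "\<And>i. i < n \<Longrightarrow> p i < n" using p by (simp add: permutes_in_image)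
  have p_eq_iff: "\<And>i j. i < n \<Longrightarrow> j < n \<Longrightarrow> p i = p j \<longleftrightarrow> i = j"
    using p by (metis permutes_inj inj_eq)
  define A where "A = poset_matrix ys - t \<cdot>\<^sub>m 1\<^sub>m n"
  have A: "A \<in> carrier_mat n n"
    unfolding A_def poset_matrix_def n_def by (intro minus_carrier_mat smult_carrier_mat one_carrier_mat)
  have A_nth: "A $$ (i, j) = (if ys ! i \<le> ys ! j then 0 else 1) - (if i = j then t else 0)"
    if "i < n" "j < n" for i j
    using that by (simp add: A_def poset_matrix_def len)
  have "poset_matrix (permute_list p ys) - t \<cdot>\<^sub>m 1\<^sub>m n = mat n n (\<lambda>(i,j). A $$ (p i, p j))"
    using assms by (intro eq_matI)
      (auto simp: A_nth poset_matrix_def len permute_list_nth p_in p_eq_iff)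
  then show ?thesis
    using det_permute_rows_and_cols[OF A p] by (simp add: poset_charpoly_def A_def n_def)
qed

lemma poset_charpoly_relabel:
  assumes "distinct xs" and "distinct zs" and "set xs = set zs"
  shows "poset_charpoly xs t = poset_charpoly zs t"
proof -
  have "mset xs = mset zs" using assms set_eq_iff_mset_eq_distinct by blast
  then obtain p where "p permutes {..<length zs}" and "permute_list p zs = xs"
    by (rule mset_eq_permutation)
  then show ?thesis using poset_charpoly_permute_list by metis
qed

lemma laplace_expansion_column_single:
  fixes A :: "'a::comm_ring_1 mat"
  assumes A: "A \<in> carrier_mat n n" and "j < n" and "k < n"
    and zero: "\<And>i. i < n \<Longrightarrow> i \<noteq> k \<Longrightarrow> A $$ (i, j) = 0"
  shows "det A = A $$ (k, j) * cofactor A k j"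
proof -
  have "det A = (\<Sum>i<n. A $$ (i, j) * cofactor A i j)"
    using laplace_expansion_column[OF A \<open>j < n\<close>] .
  also have "\<dots> = A $$ (k, j) * cofactor A k j"
    using \<open>k < n\<close> zero by (subst sum.mono_neutral_right[of "{..<n}" "{k}"]) auto
  finally show ?thesis .
qed

lemma laplace_expansion_row_single:
  fixes A :: "'a::comm_ring_1 mat"
  assumes A: "A \<in> carrier_mat n n" and "i < n" and "k < n"
    and zero: "\<And>j. j < n \<Longrightarrow> j \<noteq> k \<Longrightarrow> A $$ (i, j) = 0"
  shows "det A = A $$ (i, k) * cofactor A i k"
proof -
  have "det A = (\<Sum>j<n. A $$ (i, j) * cofactor A i j)"
    using laplace_expansion_row[OF A \<open>i < n\<close>] .
  also have "\<dots> = A $$ (i, k) * cofactor A i k"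
    using \<open>k < n\<close> zero by (subst sum.mono_neutral_right[of "{..<n}" "{k}"]) auto
  finally show ?thesis .
qed

lemma poset_charpoly_Cons_extremal:
  assumes "(\<forall>y\<in>set ys. y \<le> x) \<or> (\<forall>y\<in>set ys. x \<le> y)"
  shows "poset_charpoly (x # ys) t = - t * poset_charpoly ys t"
proof -
  define n where "n = Suc (length ys)"
  define A where "A = poset_matrix (x # ys) - t \<cdot>\<^sub>m 1\<^sub>m n"
  have A: "A \<in> carrier_mat n n"
    unfolding A_def poset_matrix_def n_def by (intro minus_carrier_mat smult_carrier_mat one_carrier_mat)
  have A_nth: "A $$ (i, j) = (if (x # ys) ! i \<le> (x # ys) ! j then 0 else 1) - (if i = j then t else 0)"
    if "i < n" "j < n" for i j
    using that by (simp add: A_def poset_matrix_def n_def)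
  have minor: "mat_delete A 0 0 = poset_matrix ys - t \<cdot>\<^sub>m 1\<^sub>m (length ys)"
    using A by (intro eq_matI) (auto simp: mat_delete_def A_nth poset_matrix_def n_def)
  have "det A = A $$ (0, 0) * cofactor A 0 0"
    using assms
  proof
    assume "\<forall>y\<in>set ys. y \<le> x"
    then show ?thesis
      by (intro laplace_expansion_column_single[OF A])
        (auto simp: n_def A_nth nth_Cons' less_Suc_eq_0_disj)
  next
    assume "\<forall>y\<in>set ys. x \<le> y"
    then show ?thesis
      by (intro laplace_expansion_row_single[OF A])
        (auto simp: n_def A_nth nth_Cons' less_Suc_eq_0_disj)
  qed
  then show ?thesis
    using A_nth[of 0 0] minor
    by (simp add: poset_charpoly_def A_def n_def cofactor_def)
qed

theorem mainTheorem15: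
  fixes X :: "'a::order set" and x :: 'a and xs ys :: "'a list" and t :: real
  assumes "finite X" and "card X > 1"
    and "x \<in> X"
    and "(\<forall>y\<in>X. y \<le> x) \<or> (\<forall>y\<in>X. x \<le> y)"
    and "distinct xs" and "set xs = X"
    and "distinct ys" and "set ys = X - {x}"
  shows "poset_charpoly xs t = - t * poset_charpoly ys t"
proof -
  have "poset_charpoly xs t = poset_charpoly (x # ys) t"
    using assms by (intro poset_charpoly_relabel) auto
  also have "\<dots> = - t * poset_charpoly ys t"
    using assms(4,8) by (intro poset_charpoly_Cons_extremal) auto
  finally show ?thesis .
qed

end
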